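(* Let $\langle A\mid\mathcal{R}\rangle$ be a finite homogeneous presentation of a monoid $M$ and let $n$ be an integer at least the maximum length of a word appearing in a relation of $\mathcal{R}$. Let $\mathcal{R}'=\{(u\ell v,urv): (\ell,r)\in\mathcal{R},\ u,v\in A^*,\ |u\ell v|=n\}$ and let $M'$ be the monoid presented by $\langle A\mid \mathcal{R}'\rangle$. Then $\langle A\mid\mathcal{R}'\rangle$ is $n$-ary homogeneous (and $n$-ary multihomogeneous if $\langle A\mid\mathcal{R}\rangle$ is multihomogeneous), and $M$ and $M'$ are Rees-ideal-commensurable: the sets $I=\{[w]\in M: |w|\geq n\}$ and $I'=\{[w]\in M': |w|\geq n\}$ are finite Rees index ideals, isomorphic via $[w]_{\mathcal{R}'}\mapsto[w]_{\mathcal{R}}$. Consequently every finitely presented (multi)homogeneous monoid is Rees-ideal-commensurable to an $n$-ary (multi)homogeneous monoid.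
   Context: A finite presentation $\langle A\mid\mathcal{R}\rangle$ is homogeneous if $|u|=|v|$ for all $(u,v)\in\mathcal{R}$; multihomogeneous if $|u|_a=|v|_a$ for every $a\in A$ and $(u,v)\in\mathcal{R}$; $n$-ary homogeneous if $|u|=|v|=n$ for all $(u,v)\in\mathcal{R}$; $n$-ary multihomogeneous if both $n$-ary homogeneous and multihomogeneous. An ideal $U$ of a semigroup $S$ has finite Rees index if $S\setminus U$ is finite; semigroups $S_1,S_2$ are Rees-ideal-commensurable if there are finite Rees index ideals $U_i\subseteq S_i$ with $U_1\cong U_2$. In a homogeneous monoid all words representing an element have the same length, so $|w|$ for $[w]$ is well defined. *)

theory Defs
  imports Main
begin

definition fin_presentation :: "'a set \<Rightarrow> ('a list \<times> 'a list) set \<Rightarrow> bool" where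
  "fin_presentation A R \<longleftrightarrow> finite A \<and> finite R \<and> R \<subseteq> lists A \<times> lists A"

definition homogeneous :: "('a list \<times> 'a list) set \<Rightarrow> bool" where
  "homogeneous R \<longleftrightarrow> (\<forall>(u,v)\<in>R. length u = length v)"

definition multihomogeneous :: "'a set \<Rightarrow> ('a list \<times> 'a list) set \<Rightarrow> bool" where
  "multihomogeneous A R \<longleftrightarrow> (\<forall>(u,v)\<in>R. \<forall>a\<in>A. count_list u a = count_list v a)"

definition nary_homogeneous :: "nat \<Rightarrow> ('a list \<times> 'a list) set \<Rightarrow> bool" where
  "nary_homogeneous n R \<longleftrightarrow> (\<forall>(u,v)\<in>R. length u = n \<and> length v = n)"

definition nary_multihomogeneous :: "nat \<Rightarrow> 'a set \<Rightarrow> ('a list \<times> 'a list) set \<Rightarrow> bool" where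
  "nary_multihomogeneous n A R \<longleftrightarrow> nary_homogeneous n R \<and> multihomogeneous A R"

definition rstep :: "('a list \<times> 'a list) set \<Rightarrow> ('a list \<times> 'a list) set" where
  "rstep R = {(u @ l @ v, u @ r @ v) | u l r v. (l, r) \<in> R}"

definition congr :: "'a set \<Rightarrow> ('a list \<times> 'a list) set \<Rightarrow> ('a list \<times> 'a list) set" where
  "congr A R = {(x, y). x \<in> lists A \<and> y \<in> lists A \<and> (x, y) \<in> (rstep R \<union> (rstep R)\<inverse>)\<^sup>*}"

definition cls :: "'a set \<Rightarrow> ('a list \<times> 'a list) set \<Rightarrow> 'a list \<Rightarrow> 'a list set" where
  "cls A R w = congr A R `` {w}"

definition pmonoid :: "'a set \<Rightarrow> ('a list \<times> 'a list) set \<Rightarrow> 'a list set set" where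
  "pmonoid A R = lists A // congr A R"

definition pmult :: "'a set \<Rightarrow> ('a list \<times> 'a list) set \<Rightarrow> 'a list set \<Rightarrow> 'a list set \<Rightarrow> 'a list set" where
  "pmult A R X Y = (\<Union>x\<in>X. \<Union>y\<in>Y. cls A R (x @ y))"

definition is_ideal :: "'a set \<Rightarrow> ('a \<Rightarrow> 'a \<Rightarrow> 'a) \<Rightarrow> 'a set \<Rightarrow> bool" where
  "is_ideal S m U \<longleftrightarrow> U \<subseteq> S \<and> (\<forall>s\<in>S. \<forall>u\<in>U. m s u \<in> U \<and> m u s \<in> U)"

definition finite_rees_index :: "'a set \<Rightarrow> ('a \<Rightarrow> 'a \<Rightarrow> 'a) \<Rightarrow> 'a set \<Rightarrow> bool" where
  "finite_rees_index S m U \<longleftrightarrow> is_ideal S m U \<and> finite (S - U)"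

definition semigroup_iso :: "('b \<Rightarrow> 'a) \<Rightarrow> 'b set \<Rightarrow> ('b \<Rightarrow> 'b \<Rightarrow> 'b) \<Rightarrow> 'a set \<Rightarrow> ('a \<Rightarrow> 'a \<Rightarrow> 'a) \<Rightarrow> bool" where
  "semigroup_iso f U2 m2 U1 m1 \<longleftrightarrow> bij_betw f U2 U1 \<and> (\<forall>x\<in>U2. \<forall>y\<in>U2. f (m2 x y) = m1 (f x) (f y))"

definition rees_ideal_commensurable ::
  "'a set \<Rightarrow> ('a \<Rightarrow> 'a \<Rightarrow> 'a) \<Rightarrow> 'b set \<Rightarrow> ('b \<Rightarrow> 'b \<Rightarrow> 'b) \<Rightarrow> bool" where
  "rees_ideal_commensurable S1 m1 S2 m2 \<longleftrightarrow>
     (\<exists>U1 U2 f. finite_rees_index S1 m1 U1 \<and> finite_rees_index S2 m2 U2 \<and>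
        semigroup_iso f U2 m2 U1 m1)"

definition nary_rels :: "'a set \<Rightarrow> ('a list \<times> 'a list) set \<Rightarrow> nat \<Rightarrow> ('a list \<times> 'a list) set" where
  "nary_rels A R n = {(u @ l @ v, u @ r @ v) | u l r v.
      (l, r) \<in> R \<and> u \<in> lists A \<and> v \<in> lists A \<and> length (u @ l @ v) = n}"

definition long_classes :: "'a set \<Rightarrow> ('a list \<times> 'a list) set \<Rightarrow> nat \<Rightarrow> 'a list set set" where
  "long_classes A R n = {cls A R w | w. w \<in> lists A \<and> n \<le> length w}"

end

theory Submission
  imports Defs
begin

(* Every relation of R' = nary_rels A R n is an instance of a relation of R
   in context, so the congruence of R' is contained in that of R.  Conversely, since R is
   homogeneous, all words on an R-derivation starting at a word w have the same length;
   if |w| >= n, each single R-step l -> r inside such a word can be padded with letters of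
   the surrounding context to a window of length exactly n, i.e. it is an R'-step.  Hence
   the two congruences coincide on words of length >= n. *)

abbreviation conv :: "('a list \<times> 'a list) set \<Rightarrow> ('a list \<times> 'a list) set" where
  "conv R \<equiv> rstep R \<union> (rstep R)\<inverse>"

lemma rstep_context:
  assumes "(x, y) \<in> rstep R"
  shows "(z @ x @ w, z @ y @ w) \<in> rstep R"
proof -
  from assms obtain u l r v where "x = u @ l @ v" "y = u @ r @ v" "(l, r) \<in> R"
    unfolding rstep_def by blast
  then have "z @ x @ w = (z @ u) @ l @ (v @ w)" "z @ y @ w = (z @ u) @ r @ (v @ w)" by simp_all
  with \<open>(l, r) \<in> R\<close> show ?thesis unfolding rstep_def by blast
qed

lemma conv_rtrancl_context:
  assumes "(x, y) \<in> (conv R)\<^sup>*"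
  shows "(z @ x @ w, z @ y @ w) \<in> (conv R)\<^sup>*"
  using assms
proof (induction rule: rtrancl_induct)
  case base
  then show ?case by simp
next
  case (step y u)
  then have "(z @ y @ w, z @ u @ w) \<in> conv R" using rstep_context by blast
  with step.IH show ?case by (rule rtrancl_into_rtrancl)
qed

lemma congr_equiv: "equiv (lists A) (congr A R)"
proof -
  have "sym ((conv R)\<^sup>*)" by (simp add: sym_Un_converse sym_rtrancl)
  then show ?thesis unfolding equiv_def refl_on_def sym_def trans_def congr_def
    by (auto intro: rtrancl_trans)
qed

lemma congr_append:
  assumes "(x, x') \<in> congr A R" and "(y, y') \<in> congr A R"
  shows "(x @ y, x' @ y') \<in> congr A R"
  using assms conv_rtrancl_context[of x x' R "[]" y] conv_rtrancl_context[of y y' R x' "[]"]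
  unfolding congr_def by (auto intro: rtrancl_trans)

lemma cls_self: "w \<in> lists A \<Longrightarrow> w \<in> cls A R w"
  unfolding cls_def congr_def by simp

lemma cls_eq_iff:
  assumes "x \<in> lists A" and "y \<in> lists A"
  shows "cls A R x = cls A R y \<longleftrightarrow> (x, y) \<in> congr A R"
  unfolding cls_def using congr_equiv assms by (rule eq_equiv_class_iff)

lemma pmonoid_elem:
  assumes "X \<in> pmonoid A R"
  obtains x where "x \<in> lists A" and "X = cls A R x"
  using assms unfolding pmonoid_def cls_def quotient_def by blast

lemma pmult_cls:
  assumes "x \<in> lists A" and "y \<in> lists A"
  shows "pmult A R (cls A R x) (cls A R y) = cls A R (x @ y)"
proof -
  have "cls A R (x' @ y') = cls A R (x @ y)" if "x' \<in> cls A R x" "y' \<in> cls A R y" for x' y'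
  proof -
    have "(x @ y, x' @ y') \<in> congr A R" using that congr_append unfolding cls_def by blast
    then show ?thesis unfolding cls_def using congr_equiv equiv_class_eq by metis
  qed
  with cls_self[OF assms(1)] cls_self[OF assms(2)] show ?thesis
    unfolding pmult_def by blast
qed

section \<open>Long classes form a finite Rees index ideal\<close>

text \<open>Multiplying a word of length at least n on either side keeps it long, and there
  are only finitely many words of length below n over a finite alphabet.\<close>

lemma long_classes_ideal: "is_ideal (pmonoid A R) (pmult A R) (long_classes A R n)"
proof -
  have sub: "long_classes A R n \<subseteq> pmonoid A R"
    unfolding long_classes_def pmonoid_def cls_def by (auto intro: quotientI)
  have absorb: "pmult A R S U \<in> long_classes A R n \<and> pmult A R U S \<in> long_classes A R n"
    if S: "S \<in> pmonoid A R" and U: "U \<in> long_classes A R n" for S U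
  proof -
    obtain x where x: "x \<in> lists A" "S = cls A R x"
      using S by (rule pmonoid_elem)
    obtain w where w: "w \<in> lists A" "n \<le> length w" "U = cls A R w"
      using U unfolding long_classes_def by blast
    have "pmult A R S U = cls A R (x @ w)" "pmult A R U S = cls A R (w @ x)"
      using pmult_cls[OF x(1) w(1)] pmult_cls[OF w(1) x(1)] x(2) w(3) by simp_all
    with x w show ?thesis unfolding long_classes_def by fastforce
  qed
  show ?thesis unfolding is_ideal_def using sub absorb by blast
qed

lemma long_classes_finite_rees_index:
  assumes "finite A"
  shows "finite_rees_index (pmonoid A R) (pmult A R) (long_classes A R n)"
proof -
  have "pmonoid A R - long_classes A R n \<subseteq> cls A R ` {w. set w \<subseteq> A \<and> length w \<le> n}"
  proof
    fix X assume X: "X \<in> pmonoid A R - long_classes A R n"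
    then obtain x where x: "x \<in> lists A" "X = cls A R x" by (blast elim: pmonoid_elem)
    with X have "length x < n" unfolding long_classes_def by fastforce
    with x show "X \<in> cls A R ` {w. set w \<subseteq> A \<and> length w \<le> n}" by auto
  qed
  moreover have "finite (cls A R ` {w. set w \<subseteq> A \<and> length w \<le> n})"
    using finite_lists_length_le[OF assms] by blast
  ultimately have "finite (pmonoid A R - long_classes A R n)" by (rule finite_subset)
  with long_classes_ideal show ?thesis unfolding finite_rees_index_def by blast
qed

lemma nary_rels_nary_homogeneous:
  assumes "homogeneous R"
  shows "nary_homogeneous n (nary_rels A R n)"
  using assms unfolding homogeneous_def nary_homogeneous_def nary_rels_def by auto

lemma nary_rels_multihomogeneous:
  assumes "multihomogeneous A R"
  shows "multihomogeneous A (nary_rels A R n)"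
  using assms unfolding multihomogeneous_def nary_rels_def by fastforce

text \<open>Each relation of R' is a relation of R in context, so R' steps are R steps.\<close>

lemma rstep_nary_rels: "rstep (nary_rels A R n) \<subseteq> rstep R"
proof
  fix p assume "p \<in> rstep (nary_rels A R n)"
  then obtain u' v' u l r v where "p = (u' @ (u @ l @ v) @ v', u' @ (u @ r @ v) @ v')"
    and "(l, r) \<in> R"
    unfolding rstep_def nary_rels_def by blast
  then have "p = ((u' @ u) @ l @ (v @ v'), (u' @ u) @ r @ (v @ v'))" and "(l, r) \<in> R" by simp_all
  then show "p \<in> rstep R" unfolding rstep_def by blast
qed

lemma congr_nary_rels: "congr A (nary_rels A R n) \<subseteq> congr A R"
proof -
  have "(conv (nary_rels A R n))\<^sup>* \<subseteq> (conv R)\<^sup>*"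
    using rstep_nary_rels[of A R n] by (intro rtrancl_mono) blast
  then show ?thesis unfolding congr_def by blast
qed

section \<open>The two congruences agree on long words\<close>

lemma conv_length:
  assumes "homogeneous R" and "(x, y) \<in> conv R"
  shows "length y = length x"
  using assms unfolding homogeneous_def rstep_def by auto

lemma conv_lists:
  assumes "R \<subseteq> lists A \<times> lists A" and "(x, y) \<in> conv R" and "x \<in> lists A"
  shows "y \<in> lists A"
  using assms unfolding rstep_def by (fastforce simp: subset_iff in_lists_conv_set)

text \<open>A single R-step l -> r inside a word over A of length at least n becomes an R'-step
  by enlarging the window around l with a suffix of the left context and a prefix of the
  right context until it has length exactly n.\<close>

lemma rstep_in_long_word:
  assumes short: "length l \<le> n" and lr: "(l, r) \<in> R"
    and pA: "p @ l @ q \<in> lists A" and long: "n \<le> length (p @ l @ q)"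
  shows "(p @ l @ q, p @ r @ q) \<in> rstep (nary_rels A R n)"
proof -
  define a where "a = min (n - length l) (length p)"
  define b where "b = n - length l - a"
  define p1 p2 where "p1 = take (length p - a) p" and "p2 = drop (length p - a) p"
  define q1 q2 where "q1 = take b q" and "q2 = drop b q"
  have split: "p = p1 @ p2" "q = q1 @ q2" unfolding p1_def p2_def q1_def q2_def by simp_all
  have "length p2 = a" "b \<le> length q" using long short unfolding p2_def a_def b_def by auto
  then have "length (p2 @ l @ q1) = n" using short unfolding q1_def a_def b_def by auto
  moreover have "p2 \<in> lists A" "q1 \<in> lists A" using pA split by auto
  ultimately have "(p2 @ l @ q1, p2 @ r @ q1) \<in> nary_rels A R n"
    unfolding nary_rels_def using lr by blast
  then have "(p1 @ (p2 @ l @ q1) @ q2, p1 @ (p2 @ r @ q1) @ q2) \<in> rstep (nary_rels A R n)"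
    unfolding rstep_def by blast
  then show ?thesis using split by simp
qed

lemma conv_in_long_word:
  assumes hom: "homogeneous R" and short: "\<forall>(l, r)\<in>R. length l \<le> n"
    and RA: "R \<subseteq> lists A \<times> lists A"
    and step: "(y, z) \<in> conv R" and yA: "y \<in> lists A" and long: "n \<le> length y"
  shows "(y, z) \<in> conv (nary_rels A R n)"
  using step
proof
  assume "(y, z) \<in> rstep R"
  then obtain p l r q where "y = p @ l @ q" "z = p @ r @ q" "(l, r) \<in> R"
    unfolding rstep_def by blast
  with rstep_in_long_word[of l n r R p q A] short yA long show ?thesis by auto
next
  assume zy: "(y, z) \<in> (rstep R)\<inverse>"
  then obtain p l r q where e: "z = p @ l @ q" "y = p @ r @ q" "(l, r) \<in> R"
    unfolding rstep_def by blast
  have "z \<in> lists A" "length z = length y"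
    using conv_lists[OF RA _ yA] conv_length[OF hom] zy by auto
  with rstep_in_long_word[of l n r R p q A] e short long show ?thesis by auto
qed

lemma congr_long_words:
  assumes hom: "homogeneous R" and short: "\<forall>(l, r)\<in>R. length l \<le> n"
    and RA: "R \<subseteq> lists A \<times> lists A"
    and xy: "(x, y) \<in> congr A R" and long: "n \<le> length x"
  shows "(x, y) \<in> congr A (nary_rels A R n)"
proof -
  from xy have xA: "x \<in> lists A" and yA: "y \<in> lists A" and path: "(x, y) \<in> (conv R)\<^sup>*"
    unfolding congr_def by auto
  from path have "y \<in> lists A \<and> length y = length x \<and> (x, y) \<in> (conv (nary_rels A R n))\<^sup>*"
  proof (induction rule: rtrancl_induct)
    case base
    then show ?case using xA by simp
  next
    case (step y z)
    then have "(y, z) \<in> conv (nary_rels A R n)"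
      using conv_in_long_word[OF hom short RA] long by simp
    with step conv_lists[OF RA] conv_length[OF hom] show ?case
      by (auto intro: rtrancl_into_rtrancl)
  qed
  with xA yA show ?thesis unfolding congr_def by simp
qed

text \<open>If the congruence of R2 refines that of R1 and the two agree on words of length at
  least n, then saturating an R2-class to the R1-class containing it is an isomorphism
  between the ideals of long classes, sending [w] to [w].\<close>

lemma saturate_cls:
  assumes "congr A R2 \<subseteq> congr A R1" and "w \<in> lists A"
  shows "congr A R1 `` cls A R2 w = cls A R1 w"
proof -
  have "trans (congr A R1)" using congr_equiv[of A R1] by (simp add: equiv_def)
  moreover have "w \<in> cls A R2 w" using assms(2) by (rule cls_self)
  ultimately show ?thesis using assms(1) unfolding cls_def by (auto dest: transD)
qed

lemma long_classes_iso:
  assumes refines: "congr A R2 \<subseteq> congr A R1"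
    and agree: "\<And>x y. (x, y) \<in> congr A R1 \<Longrightarrow> n \<le> length x \<Longrightarrow> (x, y) \<in> congr A R2"
  shows "semigroup_iso (\<lambda>X. congr A R1 `` X) (long_classes A R2 n) (pmult A R2)
           (long_classes A R1 n) (pmult A R1)"
proof -
  let ?f = "\<lambda>X. congr A R1 `` X"
  note sat = saturate_cls[OF refines]
  have inj: "inj_on ?f (long_classes A R2 n)"
  proof (rule inj_onI)
    fix X Y assume X: "X \<in> long_classes A R2 n" and Y: "Y \<in> long_classes A R2 n"
      and eq: "?f X = ?f Y"
    obtain x where x: "x \<in> lists A" "n \<le> length x" "X = cls A R2 x"
      using X unfolding long_classes_def by blast
    obtain y where y: "y \<in> lists A" "Y = cls A R2 y"
      using Y unfolding long_classes_def by blast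
    have "cls A R1 x = cls A R1 y" using eq x y sat by simp
    then have "(x, y) \<in> congr A R2" using agree x cls_eq_iff[OF x(1) y(1)] by blast
    with x y show "X = Y" using cls_eq_iff[OF x(1) y(1)] by simp
  qed
  have "?f ` long_classes A R2 n = {?f (cls A R2 w) | w. w \<in> lists A \<and> n \<le> length w}"
    unfolding long_classes_def by blast
  also have "\<dots> = long_classes A R1 n"
    unfolding long_classes_def using sat by (intro Collect_cong ex_cong1) auto
  finally have onto: "?f ` long_classes A R2 n = long_classes A R1 n" .
  have hom: "?f (pmult A R2 X Y) = pmult A R1 (?f X) (?f Y)"
    if XY: "X \<in> long_classes A R2 n" "Y \<in> long_classes A R2 n" for X Y
  proof -
    obtain x y where xy: "x \<in> lists A" "y \<in> lists A" and "X = cls A R2 x" "Y = cls A R2 y"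
      using XY unfolding long_classes_def by blast
    then have "?f (pmult A R2 X Y) = ?f (cls A R2 (x @ y))" by (simp add: pmult_cls[OF xy])
    also have "\<dots> = cls A R1 (x @ y)" using sat xy by simp
    also have "\<dots> = pmult A R1 (cls A R1 x) (cls A R1 y)" by (simp add: pmult_cls[OF xy])
    also have "\<dots> = pmult A R1 (?f X) (?f Y)" using sat xy \<open>X = _\<close> \<open>Y = _\<close> by simp
    finally show ?thesis .
  qed
  show ?thesis unfolding semigroup_iso_def bij_betw_def using inj onto hom by simp
qed

theorem proposition5p5:
  fixes A :: "'a set" and R :: "('a list \<times> 'a list) set" and n :: nat
  assumes "fin_presentation A R"
    and "homogeneous R"
    and "\<forall>(l, r)\<in>R. length l \<le> n \<and> length r \<le> n"
  shows "nary_homogeneous n (nary_rels A R n)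
    \<and> (multihomogeneous A R \<longrightarrow> nary_multihomogeneous n A (nary_rels A R n))
    \<and> finite_rees_index (pmonoid A R) (pmult A R) (long_classes A R n)
    \<and> finite_rees_index (pmonoid A (nary_rels A R n)) (pmult A (nary_rels A R n))
        (long_classes A (nary_rels A R n) n)
    \<and> (\<exists>f. semigroup_iso f (long_classes A (nary_rels A R n) n) (pmult A (nary_rels A R n))
              (long_classes A R n) (pmult A R)
           \<and> (\<forall>w\<in>lists A. n \<le> length w \<longrightarrow> f (cls A (nary_rels A R n) w) = cls A R w))
    \<and> rees_ideal_commensurable (pmonoid A R) (pmult A R)
        (pmonoid A (nary_rels A R n)) (pmult A (nary_rels A R n))"
proof -
  let ?R' = "nary_rels A R n"
  have fin: "finite A" and RA: "R \<subseteq> lists A \<times> lists A"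
    using assms(1) unfolding fin_presentation_def by auto
  have short: "\<forall>(l, r)\<in>R. length l \<le> n" using assms(3) by auto
  have iso: "semigroup_iso (\<lambda>X. congr A R `` X) (long_classes A ?R' n) (pmult A ?R')
               (long_classes A R n) (pmult A R)"
    using long_classes_iso[OF congr_nary_rels congr_long_words[OF assms(2) short RA]] .
  have on_classes: "\<forall>w\<in>lists A. n \<le> length w \<longrightarrow> congr A R `` cls A ?R' w = cls A R w"
    by (simp add: saturate_cls[OF congr_nary_rels])
  have ideal: "finite_rees_index (pmonoid A R) (pmult A R) (long_classes A R n)"
    and ideal': "finite_rees_index (pmonoid A ?R') (pmult A ?R') (long_classes A ?R' n)"
    by (rule long_classes_finite_rees_index[OF fin])+
  have hom': "nary_homogeneous n ?R'" using assms(2) by (rule nary_rels_nary_homogeneous)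
  show ?thesis
  proof (intro conjI impI exI)
    show "nary_multihomogeneous n A ?R'" if "multihomogeneous A R"
      unfolding nary_multihomogeneous_def using hom' nary_rels_multihomogeneous[OF that] ..
    show "rees_ideal_commensurable (pmonoid A R) (pmult A R) (pmonoid A ?R') (pmult A ?R')"
      unfolding rees_ideal_commensurable_def using ideal ideal' iso by blast
  qed (fact hom' ideal ideal' iso on_classes)+
qed

end
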